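(* For every integer $m\ge 1$, the function $f:2^V\to\mathbb{R}$, $f(A)=\sum_{v\in V}m_A(v)$, is non-decreasing and submodular: for all $A\subseteq B\subseteq V$, $f(A)\le f(B)$, and for all $x\in V\setminus B$, $f(B\cup\{x\})-f(B)\le f(A\cup\{x\})-f(A)$.
   Context: $G=(V,E)$ is a finite simple undirected graph, $N(v)$ the neighborhood of $v$, $N_C(v)=N(v)\cap C$. $m_A(v)=m$ if [$v\notin A$ and $|N_A(v)|\ge m$] or [$v\in A$ and $|N_A(v)|>0$]; $m_A(v)=m-1$ if $v\in A$ and $|N_A(v)|=0$; and $m_A(v)=|N_A(v)|$ otherwise. *)

theory Defs
  imports Complex_Main
begin

definition simple_graph :: "'a set \<Rightarrow> ('a \<Rightarrow> 'a \<Rightarrow> bool) \<Rightarrow> bool" where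
  "simple_graph V E \<longleftrightarrow> finite V \<and> (\<forall>u v. E u v \<longrightarrow> u \<in> V \<and> v \<in> V)
     \<and> (\<forall>u v. E u v \<longrightarrow> E v u) \<and> (\<forall>v. \<not> E v v)"

definition nbhd :: "'a set \<Rightarrow> ('a \<Rightarrow> 'a \<Rightarrow> bool) \<Rightarrow> 'a \<Rightarrow> 'a set" where
  "nbhd V E v = {u \<in> V. E v u}"

definition nbhd_in :: "'a set \<Rightarrow> ('a \<Rightarrow> 'a \<Rightarrow> bool) \<Rightarrow> 'a set \<Rightarrow> 'a \<Rightarrow> 'a set" where
  "nbhd_in V E C v = nbhd V E v \<inter> C"

definition mval :: "'a set \<Rightarrow> ('a \<Rightarrow> 'a \<Rightarrow> bool) \<Rightarrow> nat \<Rightarrow> 'a set \<Rightarrow> 'a \<Rightarrow> real" where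
  "mval V E m A v =
     (if (v \<notin> A \<and> card (nbhd_in V E A v) \<ge> m) \<or> (v \<in> A \<and> card (nbhd_in V E A v) > 0)
      then real m
      else if v \<in> A \<and> card (nbhd_in V E A v) = 0 then real m - 1
      else real (card (nbhd_in V E A v)))"

definition fval :: "'a set \<Rightarrow> ('a \<Rightarrow> 'a \<Rightarrow> bool) \<Rightarrow> nat \<Rightarrow> 'a set \<Rightarrow> real" where
  "fval V E m A = (\<Sum>v\<in>V. mval V E m A v)"

end

theory Submission
  imports Defs
begin

text \<open>Everything happens vertex by vertex: with \<open>k = |N\<^sub>A(v)|\<close>, the value \<open>m\<^sub>A(v)\<close> is
  \<open>min k m\<close> for \<open>v \<notin> A\<close> and \<open>m\<close> or \<open>m - 1\<close> (as \<open>k > 0\<close> or not) for \<open>v \<in> A\<close>.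
  Adding \<open>x\<close> to \<open>A\<close> puts \<open>x\<close> itself into \<open>A\<close> and raises \<open>k\<close> by one at the neighbours
  of \<open>x\<close>; in each case the resulting gain is non-increasing in \<open>k\<close> and in \<open>A\<close>,
  and summing over \<open>V\<close> gives submodularity.\<close>

lemma finite_nbhd_in: "finite V \<Longrightarrow> finite (nbhd_in V E C v)"
  unfolding nbhd_in_def nbhd_def by simp

lemma card_nbhd_in_mono:
  "finite V \<Longrightarrow> A \<subseteq> B \<Longrightarrow> card (nbhd_in V E A v) \<le> card (nbhd_in V E B v)"
  by (rule card_mono[OF finite_nbhd_in]) (auto simp: nbhd_in_def)

lemma card_nbhd_in_insert:
  assumes "finite V" and "x \<notin> A"
  shows "card (nbhd_in V E (A \<union> {x}) v) =
           card (nbhd_in V E A v) + (if x \<in> nbhd V E v then 1 else 0)"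
proof (cases "x \<in> nbhd V E v")
  case True
  then have "nbhd_in V E (A \<union> {x}) v = insert x (nbhd_in V E A v)"
    by (auto simp: nbhd_in_def)
  moreover have "x \<notin> nbhd_in V E A v"
    using assms(2) by (simp add: nbhd_in_def)
  ultimately show ?thesis
    using True finite_nbhd_in[OF assms(1)] by simp
next
  case False
  then have "nbhd_in V E (A \<union> {x}) v = nbhd_in V E A v"
    by (auto simp: nbhd_in_def)
  then show ?thesis
    using False by simp
qed

lemma mval_eq:
  "mval V E m A v =
     (if v \<in> A then (if card (nbhd_in V E A v) > 0 then real m else real m - 1)
      else real (min (card (nbhd_in V E A v)) m))"
  by (simp add: mval_def)

lemma mval_mono:
  assumes "finite V" and "m \<ge> 1" and "A \<subseteq> B"
  shows "mval V E m A v \<le> mval V E m B v"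
  using card_nbhd_in_mono[OF assms(1,3), of E v] assms(2,3)
  unfolding mval_eq by (auto split: if_splits)

lemma mval_marginal_antimono:
  assumes "finite V" and "m \<ge> 1" and "A \<subseteq> B" and "x \<notin> B"
  shows "mval V E m (B \<union> {x}) v - mval V E m B v
           \<le> mval V E m (A \<union> {x}) v - mval V E m A v"
proof -
  have "x \<notin> A"
    using assms(3,4) by blast
  have "card (nbhd_in V E A v) \<le> card (nbhd_in V E B v)"
    using card_nbhd_in_mono[OF assms(1,3)] .
  then show ?thesis
    using assms(2-4)
    unfolding mval_eq card_nbhd_in_insert[OF assms(1) \<open>x \<notin> A\<close>]
      card_nbhd_in_insert[OF assms(1,4)]
    by (cases "v = x"; cases "v \<in> A"; cases "v \<in> B"; auto)
qed

lemma fval_mono: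
  "finite V \<Longrightarrow> m \<ge> 1 \<Longrightarrow> A \<subseteq> B \<Longrightarrow> fval V E m A \<le> fval V E m B"
  unfolding fval_def by (intro sum_mono mval_mono)

lemma fval_submodular:
  assumes "finite V" and "m \<ge> 1" and "A \<subseteq> B" and "x \<notin> B"
  shows "fval V E m (B \<union> {x}) - fval V E m B \<le> fval V E m (A \<union> {x}) - fval V E m A"
proof -
  have "(\<Sum>v\<in>V. mval V E m (B \<union> {x}) v - mval V E m B v)
          \<le> (\<Sum>v\<in>V. mval V E m (A \<union> {x}) v - mval V E m A v)"
    using assms by (intro sum_mono mval_marginal_antimono)
  then show ?thesis
    unfolding fval_def by (simp add: sum_subtractf)
qed

theorem mainTheorem8:
  fixes V :: "'a set" and E :: "'a \<Rightarrow> 'a \<Rightarrow> bool" and m :: nat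
  assumes "simple_graph V E" and "m \<ge> 1"
  shows "(\<forall>A B. A \<subseteq> B \<and> B \<subseteq> V \<longrightarrow> fval V E m A \<le> fval V E m B)
       \<and> (\<forall>A B x. A \<subseteq> B \<and> B \<subseteq> V \<and> x \<in> V - B \<longrightarrow>
            fval V E m (B \<union> {x}) - fval V E m B \<le> fval V E m (A \<union> {x}) - fval V E m A)"
proof -
  have "finite V"
    using assms(1) by (simp add: simple_graph_def)
  show ?thesis
  proof (intro conjI allI impI)
    fix A B :: "'a set"
    assume "A \<subseteq> B \<and> B \<subseteq> V"
    then show "fval V E m A \<le> fval V E m B"
      using fval_mono[OF \<open>finite V\<close> assms(2)] by blast
  next
    fix A B :: "'a set" and x
    assume "A \<subseteq> B \<and> B \<subseteq> V \<and> x \<in> V - B"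
    then show "fval V E m (B \<union> {x}) - fval V E m B \<le> fval V E m (A \<union> {x}) - fval V E m A"
      using fval_submodular[OF \<open>finite V\<close> assms(2)] by blast
  qed
qed

end
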